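(* Consider a discounted constrained MDP with discount factor $\gamma\in(0,1)$ and a nonnegative cost, and a sequence of policy iterates $\{\pi_{\theta_k}\}_{k\ge 0}$ produced by a policy-update scheme with update interval $\Delta t>0$, together with Lagrange multipliers $\{\lambda_k\}_{k\ge0}$. Assume: (i) $\lambda_k\in[0,\lambda_{\max}]$ for all $k$; (ii) for each $k$, the cost estimate $\widehat J_c(\pi_{\theta_k})$ is the empirical mean of the discounted trajectory cost return $C(\tau)=\sum_{t=0}^\infty\gamma^t c_t$ over $N$ i.i.d. trajectories $\tau$ generated by $\pi_{\theta_k}$; (iii) there is $B_c<\infty$ with $0\le C(\tau)\le B_c$ almost surely; the updates satisfy the trust-region constraint $D_{\mathrm{KL}}(\pi_{\theta_k}\,\|\,\pi_{\theta_{k+1}})\le\delta$ for all $k$; and the population cost drift satisfies $|J_c(\pi_{\theta_{k+1}})-J_c(\pi_{\theta_k})|\le D_{\mathrm{TR}}:=\frac{2B_c}{1-\gamma}\sqrt{2\delta}$ for all $k$, where $J_c(\pi)=\mathbb E_\pi[C(\tau)]$. Fix a horizon $K$ and a confidence level $\eta\in(0,1)$, and for $k\ge1$ define $$\widehat f_k:=\frac{\widehat J_c(\pi_{\theta_{k+1}})-2\widehat J_c(\pi_{\theta_k})+\widehat J_c(\pi_{\theta_{k-1}})}{\Delta t^2}+\lambda_k .$$ Then, with probability at least $1-\eta$, $$\max_{1\le k\le K-1}\frac{|\widehat f_{k+1}-\widehat f_k|}{\Delta t}\le\frac{4}{\Delta t^3}\big(D_{\mathrm{TR}}+2\varepsilon_N\big)+\frac{2\lambda_{\max}}{\Delta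 t},\qquad \varepsilon_N:=B_c\sqrt{\frac{\log(2K/\eta)}{2N}}.$$
   Context: $J_c(\pi)$ denotes the (population) expected discounted cost return of policy $\pi$, and $c_t$ is the cost incurred at time step $t$ of a trajectory. $D_{\mathrm{KL}}$ denotes the Kullback–Leibler divergence between the policies (the trust-region constraint of TRPO, or the KL control implicitly induced by PPO clipping). *)

theory Defs
  imports "HOL-Probability.Probability"
begin

definition disc_return :: "real \<Rightarrow> ('t \<Rightarrow> nat \<Rightarrow> real) \<Rightarrow> 't \<Rightarrow> real" where
  "disc_return \<gamma> cost \<tau> = (\<Sum>t. \<gamma> ^ t * cost \<tau> t)"

text \<open>Population expected discounted cost J_c(pi) = E_pi[C(tau)], where traj pi is
  the law of trajectories generated by policy pi.\<close>
definition Jc :: "('p \<Rightarrow> 't measure) \<Rightarrow> real \<Rightarrow> ('t \<Rightarrow> nat \<Rightarrow> real) \<Rightarrow> 'p \<Rightarrow> real" where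
  "Jc traj \<gamma> cost \<pi> = (\<integral>\<tau>. disc_return \<gamma> cost \<tau> \<partial>(traj \<pi>))"

text \<open>Empirical cost estimate at iterate k: mean of C over the N sampled trajectories
  T k 0, ..., T k (N-1) (random elements on the sample space).\<close>
definition Jhat :: "real \<Rightarrow> ('t \<Rightarrow> nat \<Rightarrow> real) \<Rightarrow> nat \<Rightarrow> (nat \<Rightarrow> nat \<Rightarrow> 'w \<Rightarrow> 't) \<Rightarrow> nat \<Rightarrow> 'w \<Rightarrow> real" where
  "Jhat \<gamma> cost N T k \<omega> = (\<Sum>i<N. disc_return \<gamma> cost (T k i \<omega>)) / real N"

definition fhat :: "real \<Rightarrow> ('t \<Rightarrow> nat \<Rightarrow> real) \<Rightarrow> nat \<Rightarrow> (nat \<Rightarrow> nat \<Rightarrow> 'w \<Rightarrow> 't)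
    \<Rightarrow> real \<Rightarrow> (nat \<Rightarrow> real) \<Rightarrow> nat \<Rightarrow> 'w \<Rightarrow> real" where
  "fhat \<gamma> cost N T \<Delta>t lam k \<omega> =
     (Jhat \<gamma> cost N T (k + 1) \<omega> - 2 * Jhat \<gamma> cost N T k \<omega> + Jhat \<gamma> cost N T (k - 1) \<omega>) / \<Delta>t ^ 2
     + lam k"

end

theory Submission
  imports Defs
begin

(* Write e_j for the error of the empirical cost estimate at iterate j. By Hoeffding's lemma
   and the independence of the N sampled trajectories, every e_j is sub-Gaussian with variance
   proxy Bc^2 / (4 N). Since fhat (k + 1) - fhat k is the third difference of the estimates at
   k - 1 divided by Delta t^2, plus lam (k + 1) - lam k, and the third difference of the population
   costs is at most 4 D_TR by the drift bound, it suffices that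
   |e (k + 2) - 3 e (k + 1) + 3 e k - e (k - 1)| <= 8 eps_N for every k. The four errors belong to
   different iterates and need not be independent, but convexity of exp bounds the two-sided
   moment generating function of their weighted average by that of a single error. Chernoff's
   bound then gives failure probability 2 exp (- 2 N eps_N^2 / Bc^2) = eta / K for each k, and a
   union bound over the K - 1 indices concludes. *)

definition subgaussian :: "'a measure \<Rightarrow> real \<Rightarrow> ('a \<Rightarrow> real) \<Rightarrow> bool" where
  "subgaussian M v X \<longleftrightarrow>
     X \<in> borel_measurable M \<and> (\<forall>s. (\<integral>\<^sup>+x. exp (s * X x) \<partial>M) \<le> exp (s\<^sup>2 * v / 2))"

lemma subgaussian_scale:
  assumes "subgaussian M v X"
  shows "subgaussian M (c\<^sup>2 * v) (\<lambda>x. c * X x)"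
proof -
  have "(\<integral>\<^sup>+x. exp (s * (c * X x)) \<partial>M) \<le> exp (s\<^sup>2 * (c\<^sup>2 * v) / 2)" for s
  proof -
    have "(\<integral>\<^sup>+x. exp (s * (c * X x)) \<partial>M) = (\<integral>\<^sup>+x. exp ((s * c) * X x) \<partial>M)"
      by (simp add: mult.assoc)
    also have "\<dots> \<le> exp ((s * c)\<^sup>2 * v / 2)"
      using assms by (simp add: subgaussian_def)
    also have "(s * c)\<^sup>2 * v / 2 = s\<^sup>2 * (c\<^sup>2 * v) / 2"
      by (simp add: power_mult_distrib)
    finally show ?thesis .
  qed
  moreover have "(\<lambda>x. c * X x) \<in> borel_measurable M"
    using assms by (simp add: subgaussian_def borel_measurable_times)
  ultimately show ?thesis
    by (simp add: subgaussian_def)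
qed

lemma (in interval_bounded_random_variable) subgaussian_centered:
  "subgaussian M ((b - a)\<^sup>2 / 4) (\<lambda>x. f x - expectation f)"
  unfolding subgaussian_def
proof (intro conjI allI)
  fix s :: real
  consider "s > 0" | "s = 0" | "s < 0" by linarith
  then show "(\<integral>\<^sup>+x. exp (s * (f x - expectation f)) \<partial>M) \<le> exp (s\<^sup>2 * ((b - a)\<^sup>2 / 4) / 2)"
  proof cases
    case 1
    then show ?thesis using Hoeffdings_lemma_nn_integral[of s] by simp
  next
    case 2
    then show ?thesis by (simp add: emeasure_space_1)
  next
    case 3
    interpret flip: interval_bounded_random_variable M "\<lambda>x. - f x" "-b" "-a"
      by unfold_locales (use AE_in_interval in \<open>auto elim!: eventually_mono\<close>)
    show ?thesis
      using flip.Hoeffdings_lemma_nn_integral[of "-s"] 3 by (simp add: algebra_simps)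
  qed
qed measurable

lemma (in prob_space) subgaussian_sum:
  assumes "finite I" and indep: "indep_vars (\<lambda>_. borel) X I"
    and subg: "\<And>i. i \<in> I \<Longrightarrow> subgaussian M (v i) (X i)"
  shows "subgaussian M (\<Sum>i\<in>I. v i) (\<lambda>x. \<Sum>i\<in>I. X i x)"
  unfolding subgaussian_def
proof (intro conjI allI)
  show "(\<lambda>x. \<Sum>i\<in>I. X i x) \<in> borel_measurable M"
    using subg by (intro borel_measurable_sum) (auto simp: subgaussian_def)
next
  fix s :: real
  have "(\<integral>\<^sup>+x. exp (s * (\<Sum>i\<in>I. X i x)) \<partial>M)
      = (\<integral>\<^sup>+x. (\<Prod>i\<in>I. ennreal (exp (s * X i x))) \<partial>M)"
    by (intro nn_integral_cong) (simp add: sum_distrib_left exp_sum prod_ennreal \<open>finite I\<close>)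
  also have "\<dots> = (\<Prod>i\<in>I. \<integral>\<^sup>+x. exp (s * X i x) \<partial>M)"
    by (intro indep_vars_nn_integral \<open>finite I\<close> indep_vars_compose2[OF indep]) auto
  also have "\<dots> \<le> (\<Prod>i\<in>I. ennreal (exp (s\<^sup>2 * v i / 2)))"
    using subg by (intro prod_mono_ennreal) (auto simp: subgaussian_def)
  also have "\<dots> = exp (s\<^sup>2 * (\<Sum>i\<in>I. v i) / 2)"
    by (simp add: prod_ennreal exp_sum \<open>finite I\<close> sum_distrib_left sum_divide_distrib)
  finally show "(\<integral>\<^sup>+x. exp (s * (\<Sum>i\<in>I. X i x)) \<partial>M) \<le> exp (s\<^sup>2 * (\<Sum>i\<in>I. v i) / 2)" .
qed

lemma exp_abs_weighted_sum_le:
  fixes w y :: "'i \<Rightarrow> real"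
  assumes "finite I" and "s \<ge> 0" and pos: "(\<Sum>i\<in>I. \<bar>w i\<bar>) > 0"
  shows "exp (s * \<bar>\<Sum>i\<in>I. w i * y i\<bar> / (\<Sum>i\<in>I. \<bar>w i\<bar>))
    \<le> (\<Sum>i\<in>I. \<bar>w i\<bar> / (\<Sum>i\<in>I. \<bar>w i\<bar>) * (exp (s * y i) + exp (- s * y i)))"
proof -
  define W where "W = (\<Sum>i\<in>I. \<bar>w i\<bar>)"
  have "W > 0" "I \<noteq> {}"
    using pos by (auto simp: W_def)
  have "\<bar>\<Sum>i\<in>I. w i * y i\<bar> \<le> (\<Sum>i\<in>I. \<bar>w i\<bar> * \<bar>y i\<bar>)"
    by (rule order.trans[OF sum_abs]) (simp add: abs_mult)
  then have "s * \<bar>\<Sum>i\<in>I. w i * y i\<bar> / W \<le> s * (\<Sum>i\<in>I. \<bar>w i\<bar> * \<bar>y i\<bar>) / W"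
    using \<open>W > 0\<close> \<open>s \<ge> 0\<close> by (intro divide_right_mono mult_left_mono) auto
  also have "\<dots> = (\<Sum>i\<in>I. (\<bar>w i\<bar> / W) *\<^sub>R (s * \<bar>y i\<bar>))"
    by (simp add: sum_distrib_left sum_divide_distrib mult_ac)
  finally have "exp (s * \<bar>\<Sum>i\<in>I. w i * y i\<bar> / W)
      \<le> exp (\<Sum>i\<in>I. (\<bar>w i\<bar> / W) *\<^sub>R (s * \<bar>y i\<bar>))"
    by simp
  also have "\<dots> \<le> (\<Sum>i\<in>I. \<bar>w i\<bar> / W * exp (s * \<bar>y i\<bar>))"
    using \<open>W > 0\<close> by (intro convex_on_sum[OF \<open>finite I\<close> \<open>I \<noteq> {}\<close> exp_convex])
      (auto simp: W_def simp flip: sum_divide_distrib)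
  also have "\<dots> \<le> (\<Sum>i\<in>I. \<bar>w i\<bar> / W * (exp (s * y i) + exp (- s * y i)))"
  proof (intro sum_mono mult_left_mono)
    show "exp (s * \<bar>y i\<bar>) \<le> exp (s * y i) + exp (- s * y i)" for i
      by (cases "y i \<ge> 0") (auto simp: add_increasing add_increasing2)
  qed (use \<open>W > 0\<close> in auto)
  finally show ?thesis unfolding W_def .
qed

lemma subgaussian_nn_integral_exp_add_exp_neg_le:
  assumes "subgaussian M v X"
  shows "(\<integral>\<^sup>+x. exp (s * X x) + exp (- s * X x) \<partial>M) \<le> ennreal (2 * exp (s\<^sup>2 * v / 2))"
proof -
  have [measurable]: "X \<in> borel_measurable M"
    and mgf: "\<And>r. (\<integral>\<^sup>+x. exp (r * X x) \<partial>M) \<le> exp (r\<^sup>2 * v / 2)"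
    using assms by (simp_all add: subgaussian_def)
  have "(\<integral>\<^sup>+x. exp (s * X x) + exp (- s * X x) \<partial>M)
      = (\<integral>\<^sup>+x. ennreal (exp (s * X x)) + ennreal (exp (- s * X x)) \<partial>M)"
    by (intro nn_integral_cong) (simp add: ennreal_plus)
  also have "\<dots> = (\<integral>\<^sup>+x. exp (s * X x) \<partial>M) + (\<integral>\<^sup>+x. exp (- s * X x) \<partial>M)"
    by (rule nn_integral_add) measurable
  also have "\<dots> \<le> ennreal (exp (s\<^sup>2 * v / 2)) + ennreal (exp (s\<^sup>2 * v / 2))"
    using mgf[of s] mgf[of "- s"] by (intro add_mono) simp_all
  also have "\<dots> = ennreal (2 * exp (s\<^sup>2 * v / 2))"
    by (simp add: ennreal_mult) (rule mult_2[symmetric])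
  finally show ?thesis .
qed

lemma nn_integral_exp_abs_weighted_sum_le:
  fixes Y :: "'i \<Rightarrow> 'a \<Rightarrow> real" and w :: "'i \<Rightarrow> real"
  assumes "finite I" and subg: "\<And>i. i \<in> I \<Longrightarrow> subgaussian M v (Y i)"
    and "s \<ge> 0" and pos: "(\<Sum>i\<in>I. \<bar>w i\<bar>) > 0"
  shows "(\<integral>\<^sup>+x. exp (s * \<bar>\<Sum>i\<in>I. w i * Y i x\<bar> / (\<Sum>i\<in>I. \<bar>w i\<bar>)) \<partial>M)
    \<le> ennreal (2 * exp (s\<^sup>2 * v / 2))"
proof -
  define a where "a i = \<bar>w i\<bar> / (\<Sum>i\<in>I. \<bar>w i\<bar>)" for i
  define g where "g i x = exp (s * Y i x) + exp (- s * Y i x)" for i x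
  have a_nonneg: "a i \<ge> 0" for i
    using pos by (simp add: a_def)
  have a_sum: "(\<Sum>i\<in>I. a i) = 1"
    using pos by (simp add: a_def flip: sum_divide_distrib)
  have g_nonneg: "g i x \<ge> 0" for i x
    by (simp add: g_def add_nonneg_nonneg)
  have g_meas: "(\<lambda>x. ennreal (g i x)) \<in> borel_measurable M" if "i \<in> I" for i
  proof -
    note subg[OF that, unfolded subgaussian_def, THEN conjunct1, measurable]
    show ?thesis
      unfolding g_def by measurable
  qed
  have "(\<integral>\<^sup>+x. exp (s * \<bar>\<Sum>i\<in>I. w i * Y i x\<bar> / (\<Sum>i\<in>I. \<bar>w i\<bar>)) \<partial>M)
      \<le> (\<integral>\<^sup>+x. (\<Sum>i\<in>I. a i * g i x) \<partial>M)"
    using exp_abs_weighted_sum_le[OF \<open>finite I\<close> \<open>s \<ge> 0\<close> pos]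
    by (intro nn_integral_mono) (simp add: a_def g_def ennreal_leI)
  also have "\<dots> = (\<integral>\<^sup>+x. (\<Sum>i\<in>I. ennreal (a i) * ennreal (g i x)) \<partial>M)"
    using a_nonneg g_nonneg by (simp add: mult_nonneg_nonneg flip: ennreal_mult)
  also have "\<dots> = (\<Sum>i\<in>I. ennreal (a i) * (\<integral>\<^sup>+x. g i x \<partial>M))"
    using g_meas by (simp add: nn_integral_sum nn_integral_cmult)
  also have "\<dots> \<le> (\<Sum>i\<in>I. ennreal (a i) * ennreal (2 * exp (s\<^sup>2 * v / 2)))"
  proof (intro sum_mono mult_left_mono)
    fix i assume "i \<in> I"
    show "(\<integral>\<^sup>+x. g i x \<partial>M) \<le> ennreal (2 * exp (s\<^sup>2 * v / 2))"
      unfolding g_def by (rule subgaussian_nn_integral_exp_add_exp_neg_le[OF subg[OF \<open>i \<in> I\<close>]])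
  qed simp
  also have "\<dots> = ennreal (2 * exp (s\<^sup>2 * v / 2))"
    using a_nonneg a_sum by (simp add: sum_ennreal flip: sum_distrib_right)
  finally show ?thesis .
qed

lemma (in prob_space) prob_abs_gt_le_of_nn_integral_exp_abs:
  assumes [measurable]: "Z \<in> borel_measurable M"
    and mgf: "\<And>s. s \<ge> 0 \<Longrightarrow> (\<integral>\<^sup>+x. exp (s * \<bar>Z x\<bar>) \<partial>M) \<le> ennreal (2 * exp (s\<^sup>2 * v / 2))"
    and "v > 0" and "t \<ge> 0"
  shows "prob {x \<in> space M. t < \<bar>Z x\<bar>} \<le> 2 * exp (- t\<^sup>2 / (2 * v))"
proof (cases "t = 0")
  case True
  have "prob {x \<in> space M. t < \<bar>Z x\<bar>} \<le> 1"
    by (rule prob_le_1)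
  moreover have "2 * exp (- t\<^sup>2 / (2 * v)) = 2"
    using True by simp
  ultimately show ?thesis
    by linarith
next
  case False
  define s where "s = t / v"
  have "s > 0"
    using False \<open>v > 0\<close> \<open>t \<ge> 0\<close> by (simp add: s_def)
  have "emeasure M {x \<in> space M. t < \<bar>Z x\<bar>} \<le> emeasure M {x \<in> space M. \<bar>Z x\<bar> \<ge> t}"
    by (intro emeasure_mono) auto
  also have "\<dots> \<le> ennreal (exp (- s * t))
      * (\<integral>\<^sup>+x. ennreal (exp (s * \<bar>Z x\<bar>)) * indicator (space M) x \<partial>M)"
    using \<open>s > 0\<close> by (intro Chernoff_ineq_nn_integral_ge) auto
  also have "(\<integral>\<^sup>+x. ennreal (exp (s * \<bar>Z x\<bar>)) * indicator (space M) x \<partial>M)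
      = (\<integral>\<^sup>+x. exp (s * \<bar>Z x\<bar>) \<partial>M)"
    by (intro nn_integral_cong) simp
  also have "ennreal (exp (- s * t)) * \<dots> \<le> ennreal (exp (- s * t)) * ennreal (2 * exp (s\<^sup>2 * v / 2))"
    using mgf \<open>s > 0\<close> by (intro mult_left_mono) auto
  finally have "prob {x \<in> space M. t < \<bar>Z x\<bar>} \<le> exp (- s * t) * (2 * exp (s\<^sup>2 * v / 2))"
    by (simp add: emeasure_eq_measure flip: ennreal_mult)
  also have "\<dots> = 2 * exp (- t\<^sup>2 / (2 * v))"
    using \<open>v > 0\<close> by (simp add: s_def field_simps power2_eq_square flip: exp_add)
  finally show ?thesis .
qed

lemma (in prob_space) prob_abs_weighted_sum_gt_le:
  fixes Y :: "'i \<Rightarrow> 'a \<Rightarrow> real" and w :: "'i \<Rightarrow> real"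
  assumes "finite I" and subg: "\<And>i. i \<in> I \<Longrightarrow> subgaussian M v (Y i)"
    and "v > 0" and "t \<ge> 0"
  shows "prob {x \<in> space M. (\<Sum>i\<in>I. \<bar>w i\<bar>) * t < \<bar>\<Sum>i\<in>I. w i * Y i x\<bar>}
    \<le> 2 * exp (- t\<^sup>2 / (2 * v))"
proof (cases "(\<Sum>i\<in>I. \<bar>w i\<bar>) = 0")
  case True
  then have "w i = 0" if "i \<in> I" for i
    using \<open>finite I\<close> that by (simp add: sum_nonneg_eq_0_iff)
  then show ?thesis
    by simp
next
  case False
  define W where "W = (\<Sum>i\<in>I. \<bar>w i\<bar>)"
  have "W > 0"
    using False by (simp add: W_def order_less_le sum_nonneg)
  have "(\<lambda>x. (\<Sum>i\<in>I. w i * Y i x) / W) \<in> borel_measurable M"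
    using subg by (intro borel_measurable_divide borel_measurable_sum borel_measurable_times)
      (auto simp: subgaussian_def)
  then have "prob {x \<in> space M. t < \<bar>(\<Sum>i\<in>I. w i * Y i x) / W\<bar>} \<le> 2 * exp (- t\<^sup>2 / (2 * v))"
  proof (rule prob_abs_gt_le_of_nn_integral_exp_abs)
    show "(\<integral>\<^sup>+x. exp (s * \<bar>(\<Sum>i\<in>I. w i * Y i x) / W\<bar>) \<partial>M)
      \<le> ennreal (2 * exp (s\<^sup>2 * v / 2))" if "s \<ge> 0" for s
      using nn_integral_exp_abs_weighted_sum_le[where w = w, OF \<open>finite I\<close> subg that] \<open>W > 0\<close>
      by (simp add: W_def)
  qed fact+
  moreover have "W * t < \<bar>\<Sum>i\<in>I. w i * Y i x\<bar> \<longleftrightarrow> t < \<bar>(\<Sum>i\<in>I. w i * Y i x) / W\<bar>" for x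
    using \<open>W > 0\<close> by (simp add: field_simps)
  ultimately show ?thesis
    by (simp add: W_def)
qed

lemma (in prob_space) prob_all_ge:
  fixes p :: real
  assumes "finite I"
    and meas: "\<And>i. i \<in> I \<Longrightarrow> {x \<in> space M. P i x} \<in> events"
    and fail: "\<And>i. i \<in> I \<Longrightarrow> prob {x \<in> space M. \<not> P i x} \<le> p"
  shows "1 - card I * p \<le> prob {x \<in> space M. \<forall>i\<in>I. P i x}"
proof -
  define B where "B i = {x \<in> space M. \<not> P i x}" for i
  have B_events: "B i \<in> events" if "i \<in> I" for i
    using meas[OF that] sets.compl_sets[OF meas[OF that]] by (simp add: B_def set_diff_eq)
  have "prob (\<Union>i\<in>I. B i) \<le> (\<Sum>i\<in>I. prob (B i))"
    using B_events by (intro finite_measure_subadditive_finite \<open>finite I\<close>) auto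
  also have "\<dots> \<le> card I * p"
    using fail sum_mono[of I "\<lambda>i. prob (B i)" "\<lambda>_. p"] by (simp add: B_def)
  finally have "1 - card I * p \<le> prob (space M - (\<Union>i\<in>I. B i))"
    using B_events \<open>finite I\<close> by (subst prob_compl) auto
  also have "space M - (\<Union>i\<in>I. B i) = {x \<in> space M. \<forall>i\<in>I. P i x}"
    by (auto simp: B_def)
  finally show ?thesis .
qed

definition third_diff :: "(nat \<Rightarrow> real) \<Rightarrow> nat \<Rightarrow> real" where
  "third_diff x k = x (k + 3) - 3 * x (k + 2) + 3 * x (k + 1) - x k"

lemma third_diff_eq_weighted_sum:
  "third_diff x k = (\<Sum>i<4. ([-1, 3, -3, 1] ! i :: real) * x (k + i))"
  by (simp add: third_diff_def numeral_eq_Suc algebra_simps)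

lemma abs_third_diff_le:
  assumes "\<And>j. \<bar>x (Suc j) - x j\<bar> \<le> D"
  shows "\<bar>third_diff x k\<bar> \<le> 4 * D"
proof -
  have "third_diff x k = (x (k + 3) - x (k + 2)) - 2 * (x (k + 2) - x (k + 1)) + (x (k + 1) - x k)"
    by (simp add: third_diff_def)
  moreover have "\<bar>x (k + 3) - x (k + 2)\<bar> \<le> D" "\<bar>x (k + 2) - x (k + 1)\<bar> \<le> D" "\<bar>x (k + 1) - x k\<bar> \<le> D"
    using assms[of "k + 2"] assms[of "k + 1"] assms[of k] by (simp_all add: numeral_eq_Suc)
  ultimately show ?thesis
    by (simp add: abs_le_iff)
qed

lemma (in prob_space) prob_third_diff_gt_le:
  assumes subg: "\<And>j. subgaussian M v (Y j)" and "v > 0" and "t \<ge> 0"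
  shows "prob {x \<in> space M. 8 * t < \<bar>third_diff (\<lambda>j. Y j x) k\<bar>} \<le> 2 * exp (- t\<^sup>2 / (2 * v))"
proof -
  have "(\<Sum>i<4. \<bar>[-1, 3, -3, 1] ! i :: real\<bar>) = 8"
    by (simp add: numeral_eq_Suc)
  then show ?thesis
    using prob_abs_weighted_sum_gt_le[where I = "{..<4}" and Y = "\<lambda>i. Y (k + i)"
        and w = "\<lambda>i. [-1, 3, -3, 1] ! i"] subg assms
    by (simp add: third_diff_eq_weighted_sum)
qed

lemma fhat_Suc_diff:
  assumes "k \<ge> 1"
  shows "fhat \<gamma> cost N T \<Delta>t lam (k + 1) \<omega> - fhat \<gamma> cost N T \<Delta>t lam k \<omega>
    = third_diff (\<lambda>j. Jhat \<gamma> cost N T j \<omega>) (k - 1) / \<Delta>t\<^sup>2 + (lam (k + 1) - lam k)"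
proof -
  obtain m where "k = Suc m"
    using assms by (cases k) auto
  then show ?thesis
    by (simp add: fhat_def third_diff_def numeral_eq_Suc diff_divide_distrib add_divide_distrib algebra_simps)
qed

lemma abs_fhat_diff_le:
  assumes "\<Delta>t > 0" and "k \<ge> 1"
    and J_drift: "\<And>j. \<bar>J (Suc j) - J j\<bar> \<le> D"
    and lam: "\<And>j. 0 \<le> lam j \<and> lam j \<le> lam_max"
    and err: "\<bar>third_diff (\<lambda>j. Jhat \<gamma> cost N T j \<omega> - J j) (k - 1)\<bar> \<le> 8 * \<epsilon>"
  shows "\<bar>fhat \<gamma> cost N T \<Delta>t lam (k + 1) \<omega> - fhat \<gamma> cost N T \<Delta>t lam k \<omega>\<bar> / \<Delta>t
    \<le> 4 / \<Delta>t ^ 3 * (D + 2 * \<epsilon>) + 2 * lam_max / \<Delta>t"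
proof -
  have "third_diff (\<lambda>j. Jhat \<gamma> cost N T j \<omega>) (k - 1)
      = third_diff (\<lambda>j. Jhat \<gamma> cost N T j \<omega> - J j) (k - 1) + third_diff J (k - 1)"
    by (simp add: third_diff_def)
  then have "\<bar>third_diff (\<lambda>j. Jhat \<gamma> cost N T j \<omega>) (k - 1)\<bar> \<le> 4 * D + 8 * \<epsilon>"
    using err abs_third_diff_le[of J D, OF J_drift, of "k - 1"] by linarith
  moreover have "\<bar>lam (k + 1) - lam k\<bar> \<le> lam_max"
    using lam[of k] lam[of "k + 1"] by linarith
  ultimately have "\<bar>fhat \<gamma> cost N T \<Delta>t lam (k + 1) \<omega> - fhat \<gamma> cost N T \<Delta>t lam k \<omega>\<bar>
      \<le> (4 * D + 8 * \<epsilon>) / \<Delta>t\<^sup>2 + lam_max"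
    unfolding fhat_Suc_diff[OF \<open>k \<ge> 1\<close>] using \<open>\<Delta>t > 0\<close>
    by (simp add: abs_divide divide_right_mono order_trans[OF abs_triangle_ineq] add_mono)
  then have "\<bar>fhat \<gamma> cost N T \<Delta>t lam (k + 1) \<omega> - fhat \<gamma> cost N T \<Delta>t lam k \<omega>\<bar> / \<Delta>t
      \<le> 4 / \<Delta>t ^ 3 * (D + 2 * \<epsilon>) + lam_max / \<Delta>t"
    using \<open>\<Delta>t > 0\<close> by (simp add: divide_right_mono field_simps power3_eq_cube power2_eq_square)
  also have "\<dots> \<le> 4 / \<Delta>t ^ 3 * (D + 2 * \<epsilon>) + 2 * lam_max / \<Delta>t"
    using \<open>\<Delta>t > 0\<close> lam[of 0] by (simp add: divide_right_mono)
  finally show ?thesis .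
qed

lemma borel_measurable_Jhat:
  assumes "disc_return \<gamma> cost \<in> borel_measurable S" and "\<And>i. T k i \<in> measurable M S"
  shows "(\<lambda>\<omega>. Jhat \<gamma> cost N T k \<omega>) \<in> borel_measurable M"
proof -
  note assms[measurable]
  show ?thesis
    unfolding Jhat_def by measurable
qed

lemma (in prob_space) subgaussian_Jhat_error:
  assumes C_meas: "disc_return \<gamma> cost \<in> borel_measurable S"
    and T_meas: "\<And>i. T k i \<in> measurable M S"
    and T_distr: "\<And>i. i < N \<Longrightarrow> distr M S (T k i) = traj p"
    and T_indep: "indep_vars (\<lambda>_. S) (T k) {..<N}"
    and C_bound: "AE \<tau> in traj p. 0 \<le> disc_return \<gamma> cost \<tau> \<and> disc_return \<gamma> cost \<tau> \<le> Bc"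
    and "N \<ge> 1"
  shows "subgaussian M (Bc\<^sup>2 / (4 * real N)) (\<lambda>\<omega>. Jhat \<gamma> cost N T k \<omega> - Jc traj \<gamma> cost p)"
proof -
  define Y where "Y i \<omega> = disc_return \<gamma> cost (T k i \<omega>)" for i \<omega>
  note C_meas[measurable] T_meas[measurable]
  have Y_indep: "indep_vars (\<lambda>_. borel) Y {..<N}"
    unfolding Y_def by (rule indep_vars_compose2[OF T_indep]) measurable
  interpret Y: indep_interval_bounded_random_variables M "{..<N}" Y "\<lambda>_. 0" "\<lambda>_. Bc"
  proof unfold_locales
    fix i assume "i \<in> {..<N}"
    then have "AE \<tau> in distr M S (T k i). disc_return \<gamma> cost \<tau> \<in> {0..Bc}"
      using C_bound by (subst T_distr) auto
    then show "AE \<omega> in M. Y i \<omega> \<in> {0..Bc}"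
      by (simp add: Y_def AE_distr_iff)
  qed (simp_all add: Y_indep)
  have EY: "expectation (Y i) = Jc traj \<gamma> cost p" if "i < N" for i
    unfolding Jc_def T_distr[OF that, symmetric] Y_def by (rule integral_distr[symmetric]) measurable
  have "subgaussian M (\<Sum>i<N. (Bc - 0)\<^sup>2 / 4) (\<lambda>\<omega>. \<Sum>i<N. Y i \<omega> - expectation (Y i))"
  proof (rule subgaussian_sum)
    show "indep_vars (\<lambda>_. borel) (\<lambda>i \<omega>. Y i \<omega> - expectation (Y i)) {..<N}"
      by (rule indep_vars_compose2[OF Y_indep]) measurable
    show "subgaussian M ((Bc - 0)\<^sup>2 / 4) (\<lambda>\<omega>. Y i \<omega> - expectation (Y i))"
      if "i \<in> {..<N}" for i
      by (rule interval_bounded_random_variable.subgaussian_centered[OF Y.bounded_random_variable[OF that]])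
  qed simp
  then have "subgaussian M ((1 / N)\<^sup>2 * (\<Sum>i<N. (Bc - 0)\<^sup>2 / 4))
      (\<lambda>\<omega>. 1 / N * (\<Sum>i<N. Y i \<omega> - expectation (Y i)))"
    by (rule subgaussian_scale)
  moreover have "(1 / N)\<^sup>2 * (\<Sum>i<N. (Bc - 0)\<^sup>2 / 4) = Bc\<^sup>2 / (4 * real N)"
    using \<open>N \<ge> 1\<close> by (simp add: power2_eq_square)
  moreover have "(\<lambda>\<omega>. 1 / N * (\<Sum>i<N. Y i \<omega> - expectation (Y i)))
      = (\<lambda>\<omega>. Jhat \<gamma> cost N T k \<omega> - Jc traj \<gamma> cost p)"
    using \<open>N \<ge> 1\<close> by (simp add: EY Jhat_def Y_def sum_subtractf field_simps)
  ultimately show ?thesis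
    by (simp only:)
qed

lemma (in prob_space) AE_Jhat_eq_Jc:
  assumes C_meas: "disc_return \<gamma> cost \<in> borel_measurable S"
    and T_meas: "\<And>i. T k i \<in> measurable M S"
    and T_distr: "\<And>i. i < N \<Longrightarrow> distr M S (T k i) = traj p"
    and C_const: "AE \<tau> in traj p. disc_return \<gamma> cost \<tau> = c"
    and "N \<ge> 1"
  shows "AE \<omega> in M. Jhat \<gamma> cost N T k \<omega> = Jc traj \<gamma> cost p"
proof -
  note C_meas[measurable] T_meas[measurable]
  have traj_eq: "traj p = distr M S (T k 0)"
    using T_distr[of 0] \<open>N \<ge> 1\<close> by simp
  interpret traj: prob_space "traj p"
    using prob_space_distr[OF T_meas, of 0] by (simp add: traj_eq)
  have "Jc traj \<gamma> cost p = (\<integral>\<tau>. c \<partial>traj p)"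
    unfolding Jc_def by (rule integral_cong_AE) (use C_const in \<open>simp_all add: traj_eq\<close>)
  also have "\<dots> = c"
    by (simp add: traj.prob_space)
  finally have Jc_eq: "Jc traj \<gamma> cost p = c" .
  have "AE \<omega> in M. disc_return \<gamma> cost (T k i \<omega>) = c" if "i < N" for i
  proof -
    have "AE \<tau> in distr M S (T k i). disc_return \<gamma> cost \<tau> = c"
      using C_const by (subst T_distr[OF that])
    then show ?thesis
      by (simp add: AE_distr_iff)
  qed
  then have "AE \<omega> in M. \<forall>i\<in>{..<N}. disc_return \<gamma> cost (T k i \<omega>) = c"
    by (intro AE_finite_allI) auto
  then show ?thesis
  proof (rule eventually_mono)
    fix \<omega> assume "\<forall>i\<in>{..<N}. disc_return \<gamma> cost (T k i \<omega>) = c"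
    then have "Jhat \<gamma> cost N T k \<omega> = (\<Sum>i<N. c) / N"
      by (simp add: Jhat_def)
    also have "\<dots> = c"
      using \<open>N \<ge> 1\<close> by simp
    finally show "Jhat \<gamma> cost N T k \<omega> = Jc traj \<gamma> cost p"
      using Jc_eq by simp
  qed
qed

lemma (in prob_space) prob_third_diff_Jhat_error_gt_le:
  assumes C_meas: "disc_return \<gamma> cost \<in> borel_measurable S"
    and T_meas: "\<And>k i. T k i \<in> measurable M S"
    and T_distr: "\<And>k i. i < N \<Longrightarrow> distr M S (T k i) = traj (\<pi> k)"
    and T_indep: "\<And>k. indep_vars (\<lambda>_. S) (T k) {..<N}"
    and C_bound: "\<And>k. AE \<tau> in traj (\<pi> k). 0 \<le> disc_return \<gamma> cost \<tau> \<and> disc_return \<gamma> cost \<tau> \<le> Bc"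
    and "N \<ge> 1" and "L \<ge> 0"
  shows "prob {\<omega> \<in> space M. 8 * (Bc * sqrt (L / (2 * real N)))
           < \<bar>third_diff (\<lambda>j. Jhat \<gamma> cost N T j \<omega> - Jc traj \<gamma> cost (\<pi> j)) k\<bar>} \<le> 2 * exp (- L)"
proof -
  have "prob_space (traj (\<pi> 0))"
    using prob_space_distr[OF T_meas, of 0 0] T_distr[of 0 0] \<open>N \<ge> 1\<close> by simp
  then have "0 \<le> Bc"
    using eventually_mono[OF C_bound[of 0], of "\<lambda>_. 0 \<le> Bc"] by (simp add: prob_space.AE_const)
  show ?thesis
  proof (cases "Bc = 0")
    case True
    have C_zero: "AE \<tau> in traj (\<pi> j). disc_return \<gamma> cost \<tau> = 0" for j
      using C_bound[of j] by (rule eventually_mono) (use True in auto)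
    have "AE \<omega> in M. \<forall>j. Jhat \<gamma> cost N T j \<omega> = Jc traj \<gamma> cost (\<pi> j)"
      unfolding AE_all_countable
      by (intro allI AE_Jhat_eq_Jc[where T = T and traj = traj and p = "\<pi> _",
            OF C_meas T_meas T_distr C_zero \<open>N \<ge> 1\<close>])
    then have "AE \<omega> in M. \<not> 8 * (Bc * sqrt (L / (2 * real N)))
        < \<bar>third_diff (\<lambda>j. Jhat \<gamma> cost N T j \<omega> - Jc traj \<gamma> cost (\<pi> j)) k\<bar>"
      by eventually_elim (simp add: True third_diff_def)
    then show ?thesis
      using prob_eq_0_AE by simp
  next
    case False
    then have "Bc > 0"
      using \<open>0 \<le> Bc\<close> by simp
    have subg: "subgaussian M (Bc\<^sup>2 / (4 * real N))
        (\<lambda>\<omega>. Jhat \<gamma> cost N T j \<omega> - Jc traj \<gamma> cost (\<pi> j))" for j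
      by (rule subgaussian_Jhat_error[where T = T and k = j and traj = traj and p = "\<pi> j",
            OF C_meas T_meas T_distr T_indep C_bound \<open>N \<ge> 1\<close>])
    have "prob {\<omega> \<in> space M. 8 * (Bc * sqrt (L / (2 * real N)))
           < \<bar>third_diff (\<lambda>j. Jhat \<gamma> cost N T j \<omega> - Jc traj \<gamma> cost (\<pi> j)) k\<bar>}
        \<le> 2 * exp (- (Bc * sqrt (L / (2 * real N)))\<^sup>2 / (2 * (Bc\<^sup>2 / (4 * real N))))"
      using \<open>Bc > 0\<close> \<open>N \<ge> 1\<close> \<open>L \<ge> 0\<close>
      by (intro prob_third_diff_gt_le[OF subg]) auto
    also have "- (Bc * sqrt (L / (2 * real N)))\<^sup>2 / (2 * (Bc\<^sup>2 / (4 * real N))) = - L"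
      using \<open>Bc > 0\<close> \<open>N \<ge> 1\<close> \<open>L \<ge> 0\<close> by (simp add: power_mult_distrib field_simps)
    finally show ?thesis .
  qed
qed

lemma (in prob_space) prob_all_third_diff_Jhat_error_le:
  assumes C_meas: "disc_return \<gamma> cost \<in> borel_measurable S"
    and T_meas: "\<And>k i. T k i \<in> measurable M S"
    and T_distr: "\<And>k i. i < N \<Longrightarrow> distr M S (T k i) = traj (\<pi> k)"
    and T_indep: "\<And>k. indep_vars (\<lambda>_. S) (T k) {..<N}"
    and C_bound: "\<And>k. AE \<tau> in traj (\<pi> k). 0 \<le> disc_return \<gamma> cost \<tau> \<and> disc_return \<gamma> cost \<tau> \<le> Bc"
    and "N \<ge> 1" and "K \<ge> 1" and "0 < \<eta>" and "\<eta> < 1"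
  shows "1 - \<eta> \<le> prob {\<omega> \<in> space M. \<forall>k\<in>{1..K-1}.
           \<bar>third_diff (\<lambda>j. Jhat \<gamma> cost N T j \<omega> - Jc traj \<gamma> cost (\<pi> j)) (k - 1)\<bar>
             \<le> 8 * (Bc * sqrt (ln (2 * real K / \<eta>) / (2 * real N)))}"
proof -
  let ?err = "\<lambda>k \<omega>. \<bar>third_diff (\<lambda>j. Jhat \<gamma> cost N T j \<omega> - Jc traj \<gamma> cost (\<pi> j)) (k - 1)\<bar>"
  let ?\<epsilon> = "Bc * sqrt (ln (2 * real K / \<eta>) / (2 * real N))"
  note borel_measurable_Jhat[where T = T, OF C_meas T_meas, measurable]
  have "2 * exp (- ln (2 * real K / \<eta>)) = \<eta> / K"
    using \<open>K \<ge> 1\<close> \<open>0 < \<eta>\<close> by (simp add: exp_minus)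
  then have fail: "prob {\<omega> \<in> space M. \<not> ?err k \<omega> \<le> 8 * ?\<epsilon>} \<le> \<eta> / K" for k
    using prob_third_diff_Jhat_error_gt_le[where T = T and traj = traj and \<pi> = \<pi>,
        OF C_meas T_meas T_distr T_indep C_bound \<open>N \<ge> 1\<close>, of "ln (2 * real K / \<eta>)" "k - 1"]
      \<open>K \<ge> 1\<close> \<open>0 < \<eta>\<close> \<open>\<eta> < 1\<close>
    by (simp add: not_le)
  have "1 - card {1..K-1} * (\<eta> / K) \<le> prob {\<omega> \<in> space M. \<forall>k\<in>{1..K-1}. ?err k \<omega> \<le> 8 * ?\<epsilon>}"
  proof (rule prob_all_ge)
    show "{\<omega> \<in> space M. ?err k \<omega> \<le> 8 * ?\<epsilon>} \<in> events" for k
      unfolding third_diff_def by measurable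
  qed (use fail in auto)
  moreover have "1 - \<eta> \<le> 1 - card {1..K-1} * (\<eta> / K)"
    using \<open>K \<ge> 1\<close> \<open>0 < \<eta>\<close> by (simp add: field_simps)
  ultimately show ?thesis
    by linarith
qed

theorem lemmaC5:
  fixes M :: "'w measure" and S :: "'t measure"
    and traj :: "'p \<Rightarrow> 't measure" and cost :: "'t \<Rightarrow> nat \<Rightarrow> real"
    and \<pi> :: "nat \<Rightarrow> 'p" and DKL :: "'p \<Rightarrow> 'p \<Rightarrow> real"
    and T :: "nat \<Rightarrow> nat \<Rightarrow> 'w \<Rightarrow> 't"
    and lam :: "nat \<Rightarrow> real"
    and \<gamma> \<Delta>t lam_max Bc \<delta> \<eta> :: real and N K :: nat
  assumes M: "prob_space M"
    and gamma: "0 < \<gamma>" "\<gamma> < 1"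
    and cost_nonneg: "\<And>\<tau> t. 0 \<le> cost \<tau> t"
    and dt: "\<Delta>t > 0"
    and traj_prob: "\<And>p. prob_space (traj p)"
    and traj_sets: "\<And>p. sets (traj p) = sets S"
    and C_meas: "disc_return \<gamma> cost \<in> borel_measurable S"
    and lam: "\<And>k. 0 \<le> lam k \<and> lam k \<le> lam_max"
    and N: "N \<ge> 1"
    and T_meas: "\<And>k i. T k i \<in> measurable M S"
    and T_distr: "\<And>k i. i < N \<Longrightarrow> distr M S (T k i) = traj (\<pi> k)"
    and T_indep: "\<And>k. prob_space.indep_vars M (\<lambda>_. S) (T k) {..<N}"
    and C_bound: "\<And>p. AE \<tau> in traj p. 0 \<le> disc_return \<gamma> cost \<tau> \<and> disc_return \<gamma> cost \<tau> \<le> Bc"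
    and delta: "\<delta> \<ge> 0"
    and trust_region: "\<And>k. DKL (\<pi> k) (\<pi> (Suc k)) \<le> \<delta>"
    and drift: "\<And>k. \<bar>Jc traj \<gamma> cost (\<pi> (Suc k)) - Jc traj \<gamma> cost (\<pi> k)\<bar>
                      \<le> 2 * Bc / (1 - \<gamma>) * sqrt (2 * \<delta>)"
    and K: "K \<ge> 2"
    and eta: "0 < \<eta>" "\<eta> < 1"
  shows "measure M {\<omega> \<in> space M.
            Max ((\<lambda>k. \<bar>fhat \<gamma> cost N T \<Delta>t lam (k + 1) \<omega> - fhat \<gamma> cost N T \<Delta>t lam k \<omega>\<bar> / \<Delta>t) ` {1..K-1})
            \<le> 4 / \<Delta>t ^ 3 * (2 * Bc / (1 - \<gamma>) * sqrt (2 * \<delta>)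
                 + 2 * (Bc * sqrt (ln (2 * real K / \<eta>) / (2 * real N))))
              + 2 * lam_max / \<Delta>t}
         \<ge> 1 - \<eta>"
proof -
  \<comment> \<open>The trust region enters only through the drift hypothesis; traj_prob and traj_sets
    follow from T_distr.\<close>
  interpret prob_space M by (rule M)
  let ?err = "\<lambda>k \<omega>. \<bar>third_diff (\<lambda>j. Jhat \<gamma> cost N T j \<omega> - Jc traj \<gamma> cost (\<pi> j)) (k - 1)\<bar>"
  let ?\<epsilon> = "Bc * sqrt (ln (2 * real K / \<eta>) / (2 * real N))"
  let ?h = "\<lambda>k \<omega>. \<bar>fhat \<gamma> cost N T \<Delta>t lam (k + 1) \<omega> - fhat \<gamma> cost N T \<Delta>t lam k \<omega>\<bar> / \<Delta>t"
  let ?b = "4 / \<Delta>t ^ 3 * (2 * Bc / (1 - \<gamma>) * sqrt (2 * \<delta>) + 2 * ?\<epsilon>) + 2 * lam_max / \<Delta>t"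
  note borel_measurable_Jhat[where T = T, OF C_meas T_meas, measurable]
  have "1 - \<eta> \<le> prob {\<omega> \<in> space M. \<forall>k\<in>{1..K-1}. ?err k \<omega> \<le> 8 * ?\<epsilon>}"
    using K eta by (intro prob_all_third_diff_Jhat_error_le[where T = T and traj = traj and \<pi> = \<pi>,
        OF C_meas T_meas T_distr T_indep C_bound N]) auto
  also have "\<dots> \<le> prob {\<omega> \<in> space M. \<forall>k\<in>{1..K-1}. ?h k \<omega> \<le> ?b}"
  proof (rule finite_measure_mono)
    show "{\<omega> \<in> space M. \<forall>k\<in>{1..K-1}. ?err k \<omega> \<le> 8 * ?\<epsilon>}
        \<subseteq> {\<omega> \<in> space M. \<forall>k\<in>{1..K-1}. ?h k \<omega> \<le> ?b}"
      using abs_fhat_diff_le[where J = "\<lambda>j. Jc traj \<gamma> cost (\<pi> j)" and lam = lam and \<gamma> = \<gamma>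
          and cost = cost and N = N and T = T, OF dt _ drift lam] by auto
    show "{\<omega> \<in> space M. \<forall>k\<in>{1..K-1}. ?h k \<omega> \<le> ?b} \<in> events"
      unfolding fhat_def by measurable
  qed
  also have "{\<omega> \<in> space M. \<forall>k\<in>{1..K-1}. ?h k \<omega> \<le> ?b}
      = {\<omega> \<in> space M. Max ((\<lambda>k. ?h k \<omega>) ` {1..K-1}) \<le> ?b}"
    using K by (simp add: Max_le_iff)
  finally show ?thesis .
qed

end
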